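(* Let $g,n\ge1$ be integers and $\mathcal{A},\mathcal{B}\in\mathcal{D}_{g,n}$ weight data. (1) If $\mathcal{A}\le\mathcal{B}$, then $G^{(g,\mathcal{A})}\subset G^{(g,\mathcal{B})}$. (2) If $\mathcal{A}$ and $\mathcal{B}$ are in the same chamber, then $G^{(g,\mathcal{A})}=G^{(g,\mathcal{B})}$. (3) If $\mathcal{A}$ and $\mathcal{B}$ are obtained one from the other through a permutation of coordinates, then $G^{(g,\mathcal{A})}$ is isomorphic to $G^{(g,\mathcal{B})}$. (4) If $\mathcal{A}$ and $\mathcal{B}$ are in chambers $Ch_1$ and $Ch_2$ with $[Ch_1]=[Ch_2]$ (i.e. in the same $S_n$-orbit), then $G^{(g,\mathcal{A})}$ is isomorphic to $G^{(g,\mathcal{B})}$.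
   Context: A weight datum is $\mathcal{A}=(a_1,\dots,a_n)$ with $a_i\in\mathbb{Q}\cap(0,1]$ and $2g-2+\sum_i a_i>0$; $\mathcal{D}_{g,n}\subset\mathbb{R}^n$ is the set of weight data; $\mathcal{A}\le\mathcal{B}$ means $a_i\le b_i$ for all $i$. For $S\subseteq\{1,\dots,n\}$ with $2\le|S|\le n$, the wall $w_S$ is the locus $\sum_{i\in S}a_i=1$; chambers are the connected components of the complement in $\mathcal{D}_{g,n}$ of all walls. $S_n$ acts by permuting coordinates, and $[Ch]$ denotes the $S_n$-orbit of a chamber. A $(g,\mathcal{A})$-stable graph is a finite connected graph $G$ (loops and multiple edges allowed) with vertex weight $w:V(G)\to\mathbb{Z}_{\ge0}$ and $n$ legs labelled $1,\dots,n$ attached via $m:\{1,\dots,n\}\to V(G)$, with $b_1(G)+\sum_v w(v)=g$ and $2w(v)-2+|v|_E+|v|_{\mathcal{A}}>0$ for every vertex $v$, where $|v|_E$ is the number of edge half-edges at $v$ (loops counted twice) and $|v|_{\mathcal{A}}=\sum_{m(i)=v}a_i$. The graph complex $G^{(g,\mathcal{A})}$ is the chain complex of rational vector spaces generated by pairs $[\mathbf{G},\omega]$, where $\mathbf{G}$ is a $(g,\mathcal{A})$-stable graph and $\omega$ a total order of its edges, subject to $[\mathbf{G},\omega]=\mathrm{sgn}(\sigma)[\mathbf{G}',\omega']$ whenever there is an isomorphism of $n$-marked weighted graphs $\mathbf{G}\cong\mathbf{G}'$ under which $\omega,\omega'$ differ by $\sigma\in S_{|E(\mathbf{G})|}$;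 it is graded by the number of edges, with differential the signed sum of the contractions of the non-loop edges. *)

theory Defs
  imports "HOL-Analysis.Analysis" "HOL-Combinatorics.Permutations"
begin

text \<open>Legs are labelled by a finite type 'n (n = CARD('n)).
  A weight datum is a function 'n => rat.\<close>

definition weight_datum :: "nat \<Rightarrow> ('n::finite \<Rightarrow> rat) \<Rightarrow> bool" where
  "weight_datum g A \<longleftrightarrow> (\<forall>i. 0 < A i \<and> A i \<le> 1) \<and> 2 * of_nat g - 2 + (\<Sum>i\<in>UNIV. A i) > 0"

definition wd_le :: "('n::finite \<Rightarrow> rat) \<Rightarrow> ('n \<Rightarrow> rat) \<Rightarrow> bool" where
  "wd_le A B \<longleftrightarrow> (\<forall>i. A i \<le> B i)"

definition emb :: "('n::finite \<Rightarrow> rat) \<Rightarrow> real^'n" where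
  "emb A = (\<chi> i. of_rat (A i))"

text \<open>The real region underlying D_{g,n} (so that chambers are honest
  connected components in R^n).\<close>
definition D_real :: "nat \<Rightarrow> (real^'n::finite) set" where
  "D_real g = {x. (\<forall>i. 0 < x $ i \<and> x $ i \<le> 1) \<and> 2 * real g - 2 + (\<Sum>i\<in>UNIV. x $ i) > 0}"

definition walls :: "(real^'n::finite) set" where
  "walls = {x. \<exists>S::'n set. 2 \<le> card S \<and> (\<Sum>i\<in>S. x $ i) = 1}"

definition chambers :: "nat \<Rightarrow> (real^'n::finite) set set" where
  "chambers g = components (D_real g - walls)"

definition in_chamber :: "nat \<Rightarrow> ('n::finite \<Rightarrow> rat) \<Rightarrow> (real^'n) set \<Rightarrow> bool" where
  "in_chamber g A Ch \<longleftrightarrow> Ch \<in> chambers g \<and> emb A \<in> Ch"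

definition perm_vec :: "('n::finite \<Rightarrow> 'n) \<Rightarrow> real^'n \<Rightarrow> real^'n" where
  "perm_vec \<sigma> x = (\<chi> i. x $ (\<sigma> i))"

text \<open>A pair [G,omega]: (vertex weights, edge list, leg map). Vertices are
  0..<length ws; the edge list order is the total order omega on edges;
  edge (a,b) joins a and b (a = b is a loop); leg i is attached at m i.\<close>
type_synonym 'n ograph = "nat list \<times> (nat \<times> nat) list \<times> ('n \<Rightarrow> nat)"

definition edge_rel :: "(nat \<times> nat) list \<Rightarrow> (nat \<times> nat) set" where
  "edge_rel es = {(a,b). (a,b) \<in> set es \<or> (b,a) \<in> set es}"

definition valence :: "(nat \<times> nat) list \<Rightarrow> nat \<Rightarrow> nat" where
  "valence es v = (\<Sum>e\<leftarrow>es. (if fst e = v then 1 else 0) + (if snd e = v then 1 else 0))"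

text \<open>Connected graph of genus g: b_1(G) + sum of weights = g.\<close>
definition wf_graph :: "nat \<Rightarrow> ('n::finite) ograph \<Rightarrow> bool" where
  "wf_graph g x = (case x of (ws, es, m) \<Rightarrow>
     ws \<noteq> [] \<and> (\<forall>e\<in>set es. fst e < length ws \<and> snd e < length ws)
     \<and> (\<forall>i. m i < length ws)
     \<and> (\<forall>u<length ws. \<forall>v<length ws. (u,v) \<in> (edge_rel es)\<^sup>*)
     \<and> length es + 1 + sum_list ws = length ws + g)"

definition stable_graph :: "nat \<Rightarrow> ('n::finite \<Rightarrow> rat) \<Rightarrow> 'n ograph \<Rightarrow> bool" where
  "stable_graph g A x = (wf_graph g x \<and> (case x of (ws, es, m) \<Rightarrow>
     (\<forall>v<length ws. 2 * of_nat (ws ! v) - 2 + of_nat (valence es v) + (\<Sum>i\<in>{i. m i = v}. A i) > (0::rat))))"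

definition deg :: "'n ograph \<Rightarrow> nat" where
  "deg x = length (fst (snd x))"

text \<open>Isomorphism of n-marked weighted graphs: vertex bijection pi and edge
  bijection sigma (sigma also measures how the edge orders differ).\<close>
definition graph_iso :: "'n ograph \<Rightarrow> 'n ograph \<Rightarrow> (nat \<Rightarrow> nat) \<Rightarrow> (nat \<Rightarrow> nat) \<Rightarrow> bool" where
  "graph_iso x y \<pi> \<sigma> = (case x of (ws, es, m) \<Rightarrow> case y of (ws', es', m') \<Rightarrow>
     length ws' = length ws \<and> length es' = length es
     \<and> \<pi> permutes {..<length ws} \<and> \<sigma> permutes {..<length es}
     \<and> (\<forall>v<length ws. ws' ! (\<pi> v) = ws ! v)
     \<and> (\<forall>i. m' i = \<pi> (m i))
     \<and> (\<forall>j<length es. es' ! (\<sigma> j) = (\<pi> (fst (es!j)), \<pi> (snd (es!j)))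
                      \<or> es' ! (\<sigma> j) = (\<pi> (snd (es!j)), \<pi> (fst (es!j)))))"

definition remove_nth :: "nat \<Rightarrow> 'a list \<Rightarrow> 'a list" where
  "remove_nth i xs = take i xs @ drop (Suc i) xs"

text \<open>Contraction of the j-th edge (a,b), a ~= b: b is merged into a.\<close>
definition contract :: "'n ograph \<Rightarrow> nat \<Rightarrow> 'n ograph" where
  "contract x j = (case x of (ws, es, m) \<Rightarrow>
     let a = fst (es ! j); b = snd (es ! j);
         r = (\<lambda>v. let u = (if v = b then a else v) in if u > b then u - 1 else u)
     in (remove_nth b (ws[a := ws ! a + ws ! b]),
         map (\<lambda>(p,q). (r p, r q)) (remove_nth j es),
         r \<circ> m))"

definition delta :: "'a \<Rightarrow> 'a \<Rightarrow> rat" where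
  "delta x = (\<lambda>z. if z = x then 1 else 0)"

definition lin_span :: "('a \<Rightarrow> rat) set \<Rightarrow> ('a \<Rightarrow> rat) set" where
  "lin_span S = {f. \<exists>L. set (map snd L) \<subseteq> S \<and> f = (\<lambda>z. sum_list (map (\<lambda>(c,v). c * v z) L))}"

definition rel_vecs :: "nat \<Rightarrow> ('n::finite ograph \<Rightarrow> rat) set" where
  "rel_vecs g = {(\<lambda>z. delta x z - of_int (sign \<sigma>) * delta y z) | x y \<pi> \<sigma>.
                   wf_graph g x \<and> graph_iso x y \<pi> \<sigma>}"

definition Rel :: "nat \<Rightarrow> ('n::finite ograph \<Rightarrow> rat) set" where
  "Rel g = lin_span (rel_vecs g)"

definition coset :: "('a \<Rightarrow> rat) set \<Rightarrow> ('a \<Rightarrow> rat) \<Rightarrow> ('a \<Rightarrow> rat) set" where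
  "coset R f = {h. \<exists>r\<in>R. h = (\<lambda>z. f z + r z)}"

definition rep :: "('a \<Rightarrow> rat) set \<Rightarrow> 'a \<Rightarrow> rat" where
  "rep X = (SOME f. f \<in> X)"

definition addQ :: "nat \<Rightarrow> ('n::finite ograph \<Rightarrow> rat) set \<Rightarrow> ('n ograph \<Rightarrow> rat) set \<Rightarrow> ('n ograph \<Rightarrow> rat) set" where
  "addQ g X Y = coset (Rel g) (\<lambda>z. rep X z + rep Y z)"

definition smulQ :: "nat \<Rightarrow> rat \<Rightarrow> ('n::finite ograph \<Rightarrow> rat) set \<Rightarrow> ('n ograph \<Rightarrow> rat) set" where
  "smulQ g c X = coset (Rel g) (\<lambda>z. c * rep X z)"

definition dgen :: "'n ograph \<Rightarrow> 'n ograph \<Rightarrow> rat" where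
  "dgen x y = (\<Sum>j<deg x. if fst (fst (snd x) ! j) \<noteq> snd (fst (snd x) ! j) \<and> contract x j = y
                          then (-1) ^ j else 0)"

definition dfree :: "('n ograph \<Rightarrow> rat) \<Rightarrow> 'n ograph \<Rightarrow> rat" where
  "dfree f = (\<lambda>y. \<Sum>x\<in>{x. f x \<noteq> 0}. f x * dgen x y)"

definition dQ :: "nat \<Rightarrow> ('n::finite ograph \<Rightarrow> rat) set \<Rightarrow> ('n ograph \<Rightarrow> rat) set" where
  "dQ g X = coset (Rel g) (dfree (rep X))"

text \<open>Degree-k part of the graph complex G^(g,A), realised inside the
  quotient of the free space on all connected genus-g n-marked graphs.\<close>
definition GC :: "nat \<Rightarrow> ('n::finite \<Rightarrow> rat) \<Rightarrow> nat \<Rightarrow> ('n ograph \<Rightarrow> rat) set set" where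
  "GC g A k = {coset (Rel g) f | f. f \<in> lin_span (delta ` {x. stable_graph g A x \<and> deg x = k})}"

definition GC_subcomplex :: "nat \<Rightarrow> ('n::finite \<Rightarrow> rat) \<Rightarrow> ('n \<Rightarrow> rat) \<Rightarrow> bool" where
  "GC_subcomplex g A B \<longleftrightarrow> (\<forall>k. GC g A k \<subseteq> GC g B k)"

definition GC_iso :: "nat \<Rightarrow> ('n::finite \<Rightarrow> rat) \<Rightarrow> ('n \<Rightarrow> rat) \<Rightarrow> bool" where
  "GC_iso g A B \<longleftrightarrow> (\<exists>\<Phi>. \<forall>k.
     bij_betw (\<Phi> k) (GC g A k) (GC g B k)
     \<and> (\<forall>X\<in>GC g A k. \<forall>Y\<in>GC g A k. \<Phi> k (addQ g X Y) = addQ g (\<Phi> k X) (\<Phi> k Y))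
     \<and> (\<forall>c. \<forall>X\<in>GC g A k. \<Phi> k (smulQ g c X) = smulQ g c (\<Phi> k X))
     \<and> (\<forall>X\<in>GC g A (Suc k). \<Phi> k (dQ g X) = dQ g (\<Phi> (Suc k) X)))"

end

theory Submission
  imports Defs
begin

(* If A <= B, every A-stable graph is B-stable, so the generators of G^(g,A) are among those
   of G^(g,B).

   Whether a vertex of weight w and valence d is stable depends on the weights only if
   2w - 2 + d is 0 or -1 (w = d = 0 is impossible in a connected graph of genus g >= 1): the
   legs at the vertex must then weigh more than 0, i.e. there is a leg, resp. more than 1, which
   forces at least two legs since all weights are <= 1. So stability only depends on which wall
   inequalities sum_{i in S} a_i > 1 with |S| >= 2 hold, and these are constant on a chamber,
   a connected set avoiding the walls.

   Relabelling the legs by a permutation sigma maps A-stable graphs bijectively onto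
   (A o sigma)-stable ones and commutes with isomorphisms and contractions, so it induces an
   isomorphism of complexes. The point needing care is that the differential is well defined
   on the quotient by the relations: contracting corresponding edges j and sigma j of
   isomorphic graphs gives isomorphic graphs whose edge orders differ by a permutation of sign
   sgn(sigma) (-1)^(j + sigma j), which cancels the signs (-1)^j and (-1)^(sigma j) in d.
   Part (4) combines the last two observations. *)

section \<open>Finite linear combinations and their cosets\<close>

definition finite_support :: "('a \<Rightarrow> rat) \<Rightarrow> bool" where
  "finite_support f \<longleftrightarrow> finite {z. f z \<noteq> 0}"

lemma lin_span_zero: "(\<lambda>z. 0) \<in> lin_span S"
  unfolding lin_span_def by (rule CollectI, rule exI[of _ "[]"]) auto

lemma lin_span_cons:
  assumes "v \<in> S" and "h \<in> lin_span S"
  shows "(\<lambda>z. c * v z + h z) \<in> lin_span S"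
proof -
  obtain L where "set (map snd L) \<subseteq> S" "h = (\<lambda>z. sum_list (map (\<lambda>(c,v). c * v z) L))"
    using assms(2) unfolding lin_span_def by blast
  then show ?thesis
    using assms(1) unfolding lin_span_def by (intro CollectI exI[of _ "(c, v) # L"]) auto
qed

lemma lin_span_induct [consumes 1, case_names zero cons]:
  assumes "f \<in> lin_span S"
    and "P (\<lambda>z. 0)"
    and "\<And>c v h. v \<in> S \<Longrightarrow> h \<in> lin_span S \<Longrightarrow> P h \<Longrightarrow> P (\<lambda>z. c * v z + h z)"
  shows "P f"
proof -
  obtain L where L: "set (map snd L) \<subseteq> S" and f: "f = (\<lambda>z. sum_list (map (\<lambda>(c,v). c * v z) L))"
    using assms(1) unfolding lin_span_def by blast
  from L have "(\<lambda>z. sum_list (map (\<lambda>(c,v). c * v z) L)) \<in> lin_span S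
      \<and> P (\<lambda>z. sum_list (map (\<lambda>(c,v). c * v z) L))"
  proof (induction L)
    case Nil
    then show ?case using lin_span_zero assms(2) by simp
  next
    case (Cons cv L)
    then show ?case using lin_span_cons assms(3) by (cases cv) auto
  qed
  then show ?thesis unfolding f by blast
qed

lemma lin_span_base: "v \<in> S \<Longrightarrow> v \<in> lin_span S"
  using lin_span_cons[OF _ lin_span_zero, of v S 1] by simp

lemma lin_span_add:
  assumes "f \<in> lin_span S" and "h \<in> lin_span S"
  shows "(\<lambda>z. f z + h z) \<in> lin_span S"
  using assms(1) by (induction rule: lin_span_induct)
    (simp_all add: assms(2) add.assoc lin_span_cons)

lemma lin_span_smult: "f \<in> lin_span S \<Longrightarrow> (\<lambda>z. c * f z) \<in> lin_span S"
  by (induction rule: lin_span_induct)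
    (simp_all add: lin_span_zero lin_span_cons distrib_left mult.assoc[symmetric])

lemma lin_span_sum:
  "finite I \<Longrightarrow> (\<And>j. j \<in> I \<Longrightarrow> t j \<in> lin_span S) \<Longrightarrow> (\<lambda>z. \<Sum>j\<in>I. t j z) \<in> lin_span S"
  by (induction I rule: finite_induct) (simp_all add: lin_span_zero lin_span_add)

lemma lin_span_mono: "S \<subseteq> T \<Longrightarrow> lin_span S \<subseteq> lin_span T"
  unfolding lin_span_def by blast

lemma lin_span_precomp:
  assumes "\<And>v. v \<in> S \<Longrightarrow> (\<lambda>z. v (\<rho> z)) \<in> lin_span T" and "f \<in> lin_span S"
  shows "(\<lambda>z. f (\<rho> z)) \<in> lin_span T"
  using assms(2) by (induction rule: lin_span_induct)
    (simp_all add: assms(1) lin_span_zero lin_span_add lin_span_smult)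

lemma finite_support_lin_span:
  assumes "\<And>v. v \<in> S \<Longrightarrow> finite_support v" and "f \<in> lin_span S"
  shows "finite_support f"
  using assms(2)
proof (induction rule: lin_span_induct)
  case (cons c v h)
  have "{z. c * v z + h z \<noteq> 0} \<subseteq> {z. v z \<noteq> 0} \<union> {z. h z \<noteq> 0}" by auto
  then show ?case
    using assms(1)[OF cons(1)] cons(3) unfolding finite_support_def by (auto intro: finite_subset)
qed (simp add: finite_support_def)

lemma finite_support_delta: "finite_support (delta x)"
  unfolding finite_support_def delta_def by simp

lemma coset_self: "f \<in> coset (lin_span S) f"
  unfolding coset_def using lin_span_zero by fastforce

lemma coset_eq_iff:
  "coset (lin_span S) f = coset (lin_span S) h \<longleftrightarrow> (\<lambda>z. f z - h z) \<in> lin_span S"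
proof
  assume "coset (lin_span S) f = coset (lin_span S) h"
  then have "f \<in> coset (lin_span S) h" using coset_self by metis
  then show "(\<lambda>z. f z - h z) \<in> lin_span S" unfolding coset_def by auto
next
  assume d: "(\<lambda>z. f z - h z) \<in> lin_span S"
  have shift: "coset (lin_span S) f \<subseteq> coset (lin_span S) h"
    if "(\<lambda>z. f z - h z) \<in> lin_span S" for f h
  proof
    fix k assume "k \<in> coset (lin_span S) f"
    then obtain r where "r \<in> lin_span S" "k = (\<lambda>z. f z + r z)" unfolding coset_def by blast
    then show "k \<in> coset (lin_span S) h"
      using lin_span_add[OF that \<open>r \<in> lin_span S\<close>] unfolding coset_def
      by (intro CollectI bexI[of _ "\<lambda>z. (f z - h z) + r z"]) auto
  qed
  have "(\<lambda>z. h z - f z) \<in> lin_span S" using lin_span_smult[OF d, of "-1"] by simp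
  then show "coset (lin_span S) f = coset (lin_span S) h" using shift d by blast
qed

lemma rep_coset_diff: "(\<lambda>z. rep (coset (lin_span S) f) z - f z) \<in> lin_span S"
proof -
  have "rep (coset (lin_span S) f) \<in> coset (lin_span S) f"
    unfolding rep_def using coset_self by (metis someI)
  then show ?thesis unfolding coset_def by auto
qed

lemma coset_rep_add:
  "coset (lin_span S) (\<lambda>z. rep (coset (lin_span S) f) z + rep (coset (lin_span S) h) z)
   = coset (lin_span S) (\<lambda>z. f z + h z)"
  unfolding coset_eq_iff
  using lin_span_add[OF rep_coset_diff[of S f] rep_coset_diff[of S h]]
  by (simp add: algebra_simps)

lemma coset_rep_smult:
  "coset (lin_span S) (\<lambda>z. c * rep (coset (lin_span S) f) z) = coset (lin_span S) (\<lambda>z. c * f z)"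
  unfolding coset_eq_iff
  using lin_span_smult[OF rep_coset_diff[of S f], of c] by (simp add: algebra_simps)

lemma dfree_eq_sum:
  "finite F \<Longrightarrow> {z. f z \<noteq> 0} \<subseteq> F \<Longrightarrow> dfree f y = (\<Sum>z\<in>F. f z * dgen z y)"
  unfolding dfree_def by (rule sum.mono_neutral_left) auto

lemma dfree_zero: "dfree (\<lambda>z. 0) = (\<lambda>y. 0)"
  unfolding dfree_def by simp

lemma dfree_linear:
  assumes "finite_support f" and "finite_support h"
  shows "dfree (\<lambda>z. c * f z + h z) = (\<lambda>y. c * dfree f y + dfree h y)"
proof
  fix y
  let ?F = "{z. f z \<noteq> 0} \<union> {z. h z \<noteq> 0}"
  have F: "finite ?F" using assms unfolding finite_support_def by simp
  have "dfree (\<lambda>z. c * f z + h z) y = (\<Sum>z\<in>?F. (c * f z + h z) * dgen z y)"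
    by (rule dfree_eq_sum[OF F]) auto
  also have "\<dots> = c * (\<Sum>z\<in>?F. f z * dgen z y) + (\<Sum>z\<in>?F. h z * dgen z y)"
    by (simp add: algebra_simps sum.distrib sum_distrib_left)
  also have "\<dots> = c * dfree f y + dfree h y"
    using dfree_eq_sum[OF F, of f y] dfree_eq_sum[OF F, of h y] by auto
  finally show "dfree (\<lambda>z. c * f z + h z) y = c * dfree f y + dfree h y" .
qed

lemma dfree_lin_span:
  assumes "\<And>v. v \<in> S \<Longrightarrow> finite_support v \<and> dfree v \<in> lin_span T" and "f \<in> lin_span S"
  shows "dfree f \<in> lin_span T"
  using assms(2)
proof (induction rule: lin_span_induct)
  case (cons c v h)
  have "finite_support h" using finite_support_lin_span assms(1) cons(2) by blast
  then show ?case
    using assms(1)[OF cons(1)] cons(3) by (simp add: dfree_linear lin_span_add lin_span_smult)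
qed (simp add: dfree_zero lin_span_zero)

section \<open>Positions after deleting an entry\<close>

definition succ_above :: "nat \<Rightarrow> nat \<Rightarrow> nat" where
  "succ_above t k = (if k < t then k else Suc k)"

lemma succ_above_less: "k < N - 1 \<Longrightarrow> succ_above t k < N"
  unfolding succ_above_def by auto

lemma length_remove_nth: "t < length xs \<Longrightarrow> length (remove_nth t xs) = length xs - 1"
  unfolding remove_nth_def by simp

lemma nth_remove_nth:
  "t < length xs \<Longrightarrow> k < length xs - 1 \<Longrightarrow> remove_nth t xs ! k = xs ! succ_above t k"
  unfolding remove_nth_def succ_above_def by (auto simp: nth_append min_def)

lemma set_remove_nth: "set (remove_nth t xs) \<subseteq> set xs"
  unfolding remove_nth_def by (auto dest: in_set_takeD in_set_dropD)

lemma nth_mem_remove_nth: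
  assumes "i < length xs" and "t < length xs" and "i \<noteq> t"
  shows "xs ! i \<in> set (remove_nth t xs)"
proof -
  define k where "k = (if i < t then i else i - 1)"
  have "k < length xs - 1" "succ_above t k = i"
    using assms unfolding k_def succ_above_def by auto
  then show ?thesis
    using nth_remove_nth[OF assms(2)] length_remove_nth[OF assms(2)] by (metis nth_mem)
qed

definition rotate_in :: "nat \<Rightarrow> nat \<Rightarrow> nat \<Rightarrow> nat" where
  "rotate_in N t k = (if k < N - 1 then succ_above t k else if k = N - 1 then t else k)"

lemma rotate_in_last: "rotate_in N (N - 1) = id"
  unfolding rotate_in_def succ_above_def by (auto simp: fun_eq_iff)

lemma rotate_in_step:
  assumes "Suc t < N"
  shows "rotate_in N t = Transposition.transpose t (Suc t) \<circ> rotate_in N (Suc t)"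
proof
  fix k
  show "rotate_in N t k = (Transposition.transpose t (Suc t) \<circ> rotate_in N (Suc t)) k"
    using assms by (cases "k = t"; cases "k = Suc t") (auto simp: rotate_in_def succ_above_def)
qed

lemma sign_rotate_in:
  "t < N \<Longrightarrow> permutation (rotate_in N t) \<and> sign (rotate_in N t) = (-1) ^ (N - 1 - t)"
proof (induction "N - 1 - t" arbitrary: t)
  case 0
  then have "t = N - 1" by simp
  then show ?case using rotate_in_last by (simp add: permutation_id)
next
  case (Suc d)
  then have "d = N - 1 - Suc t" and "Suc t < N" by simp_all
  then have "permutation (rotate_in N (Suc t)) \<and> sign (rotate_in N (Suc t)) = (-1) ^ d"
    using Suc.hyps(1) by blast
  moreover have "(-1::int) ^ (N - 1 - t) = - ((-1) ^ d)"
    using Suc.hyps(2)[symmetric] by simp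
  ultimately show ?case
    using \<open>Suc t < N\<close>
    by (simp add: rotate_in_step permutation_compose permutation_swap_id sign_compose sign_swap_id)
qed

lemma rotate_in_permutes: "t < N \<Longrightarrow> rotate_in N t permutes {..<N}"
proof -
  assume t: "t < N"
  have "rotate_in N t permutes UNIV"
    using sign_rotate_in[OF t] permutation_bijective bij_imp_permutes by blast
  then show ?thesis
    by (rule permutes_superset) (use t in \<open>auto simp: rotate_in_def\<close>)
qed

(* If \<sigma> matches the edges of two isomorphic graphs, perm_remove \<sigma> N j matches the edges left
   after deleting edge j of the first and edge \<sigma> j of the second. *)
definition perm_remove :: "(nat \<Rightarrow> nat) \<Rightarrow> nat \<Rightarrow> nat \<Rightarrow> nat \<Rightarrow> nat" where
  "perm_remove \<sigma> N j = inv (rotate_in N (\<sigma> j)) \<circ> \<sigma> \<circ> rotate_in N j"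

lemma perm_remove_permutes:
  assumes \<sigma>: "\<sigma> permutes {..<N}" and j: "j < N"
  shows "perm_remove \<sigma> N j permutes {..<N - 1}"
proof -
  have \<sigma>j: "\<sigma> j < N" using permutes_in_image[OF \<sigma>] j by simp
  have rot: "rotate_in N j permutes {..<N}" "rotate_in N (\<sigma> j) permutes {..<N}"
    using rotate_in_permutes j \<sigma>j by auto
  have "perm_remove \<sigma> N j permutes {..<N}"
    unfolding perm_remove_def by (intro permutes_compose permutes_inv rot \<sigma>)
  moreover have "perm_remove \<sigma> N j x = x" if "x \<in> {..<N} - {..<N - 1}" for x
  proof -
    have "x = N - 1" using that by auto
    then show ?thesis
      using permutes_inverses(2)[OF rot(2), of "N - 1"] by (simp add: perm_remove_def rotate_in_def)
  qed
  ultimately show ?thesis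
    by (rule permutes_superset)
qed

lemma succ_above_perm_remove:
  assumes \<sigma>: "\<sigma> permutes {..<N}" and j: "j < N" and k: "k < N - 1"
  shows "perm_remove \<sigma> N j k < N - 1"
    and "succ_above (\<sigma> j) (perm_remove \<sigma> N j k) = \<sigma> (succ_above j k)"
proof -
  show lt: "perm_remove \<sigma> N j k < N - 1"
    using permutes_in_image[OF perm_remove_permutes[OF \<sigma> j]] k by simp
  have "rotate_in N (\<sigma> j) permutes {..<N}"
    using rotate_in_permutes j permutes_in_image[OF \<sigma>] by simp
  then have "rotate_in N (\<sigma> j) (perm_remove \<sigma> N j k) = \<sigma> (rotate_in N j k)"
    unfolding perm_remove_def by (simp add: permutes_inverses(1))
  then show "succ_above (\<sigma> j) (perm_remove \<sigma> N j k) = \<sigma> (succ_above j k)"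
    using lt k by (simp add: rotate_in_def)
qed

lemma sign_perm_remove:
  assumes \<sigma>: "\<sigma> permutes {..<N}" and j: "j < N"
  shows "sign (perm_remove \<sigma> N j) = sign \<sigma> * (-1) ^ (j + \<sigma> j)"
proof -
  have \<sigma>j: "\<sigma> j < N" using permutes_in_image[OF \<sigma>] j by simp
  have p: "permutation \<sigma>" using \<sigma> permutation_permutes by blast
  have "sign (perm_remove \<sigma> N j) = sign \<sigma> * ((-1) ^ (N - 1 - \<sigma> j) * (-1) ^ (N - 1 - j))"
    using sign_rotate_in[OF j] sign_rotate_in[OF \<sigma>j] p
    by (simp add: perm_remove_def sign_compose permutation_compose permutation_inverse sign_inverse)
  also have "(-1::int) ^ (N - 1 - \<sigma> j) * (-1) ^ (N - 1 - j) = (-1) ^ (j + \<sigma> j)"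
  proof -
    have "(N - 1 - \<sigma> j) + (N - 1 - j) + (j + \<sigma> j) = 2 * (N - 1)" using j \<sigma>j by simp
    then have "even ((N - 1 - \<sigma> j) + (N - 1 - j)) \<longleftrightarrow> even (j + \<sigma> j)"
      by (metis dvd_triv_left even_add)
    then show ?thesis by (metis power_add minus_one_power_iff)
  qed
  finally show ?thesis .
qed

section \<open>Edge contraction\<close>

definition merge_vertex :: "nat \<Rightarrow> nat \<Rightarrow> nat \<Rightarrow> nat" where
  "merge_vertex a b v = (let u = (if v = b then a else v) in if u > b then u - 1 else u)"

lemma contract_eq:
  assumes "es ! j = (a, b)"
  shows "contract (ws, es, m) j =
    (remove_nth b (ws[a := ws ! a + ws ! b]),
     map (map_prod (merge_vertex a b) (merge_vertex a b)) (remove_nth j es),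
     merge_vertex a b \<circ> m)"
  using assms unfolding contract_def merge_vertex_def map_prod_def by simp

lemma merge_vertex_less: "a < L \<Longrightarrow> b < L \<Longrightarrow> a \<noteq> b \<Longrightarrow> v < L \<Longrightarrow> merge_vertex a b v < L - 1"
  unfolding merge_vertex_def Let_def by auto

lemma merge_vertex_succ_above: "merge_vertex a b (succ_above b k) = k"
  unfolding merge_vertex_def succ_above_def Let_def by auto

lemma succ_above_merge_vertex:
  "a \<noteq> b \<Longrightarrow> succ_above b (merge_vertex a b v) = (if v = b then a else v)"
  unfolding merge_vertex_def succ_above_def Let_def by auto

lemma merge_vertex_right: "merge_vertex a b b = merge_vertex a b a"
  unfolding merge_vertex_def by simp

lemma nth_merge_weights:
  assumes "a < length ws" "b < length ws" "a \<noteq> b" "u < length ws"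
  shows "remove_nth b (ws[a := ws ! a + ws ! b]) ! merge_vertex a b u
    = (if u = a \<or> u = b then ws ! a + ws ! b else ws ! u)"
  using nth_remove_nth[of b "ws[a := ws ! a + ws ! b]" "merge_vertex a b u"]
    merge_vertex_less[OF assms] succ_above_merge_vertex[OF assms(3)] assms
  by auto

lemma sum_list_remove_nth:
  fixes xs :: "'a::comm_monoid_add list"
  assumes "t < length xs"
  shows "sum_list (remove_nth t xs) + xs ! t = sum_list xs"
proof -
  have "sum_list xs = sum_list (take t xs @ xs ! t # drop (Suc t) xs)"
    using id_take_nth_drop[OF assms] by simp
  then show ?thesis unfolding remove_nth_def by (simp add: ac_simps)
qed

lemma sum_list_merge_weights:
  assumes "a < length ws" "b < length ws" "a \<noteq> b"
  shows "sum_list (remove_nth b (ws[a := ws ! a + ws ! b])) = sum_list (ws :: nat list)"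
  using sum_list_remove_nth[of b "ws[a := ws ! a + ws ! b]"] sum_list_update[of a ws] assms
  by simp

lemma rtrancl_edge_rel_map:
  assumes "\<And>q s. (q, s) \<in> set es \<Longrightarrow> f q = f s \<or> (f q, f s) \<in> set es'"
    and "(p, q) \<in> (edge_rel es)\<^sup>*"
  shows "(f p, f q) \<in> (edge_rel es')\<^sup>*"
  using assms(2)
proof (induction rule: rtrancl_induct)
  case (step q s)
  have "f q = f s \<or> (f q, f s) \<in> edge_rel es'"
    using step.hyps(2) assms(1)[of q s] assms(1)[of s q] unfolding edge_rel_def by auto
  then show ?case using step.IH by (auto intro: rtrancl_into_rtrancl)
qed simp

lemma contract_edge_image:
  assumes j: "j < length es" and e: "es ! j = (a, b)" and qs: "(q, s) \<in> set es"
  shows "merge_vertex a b q = merge_vertex a b s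
    \<or> (merge_vertex a b q, merge_vertex a b s)
        \<in> set (map (map_prod (merge_vertex a b) (merge_vertex a b)) (remove_nth j es))"
proof -
  obtain i where i: "i < length es" "es ! i = (q, s)" using qs by (auto simp: in_set_conv_nth)
  show ?thesis
  proof (cases "i = j")
    case True
    then have "q = a" "s = b" using i e by simp_all
    then show ?thesis using merge_vertex_right by simp
  next
    case False
    then have "(q, s) \<in> set (remove_nth j es)" using nth_mem_remove_nth[OF i(1) j] i(2) by simp
    from imageI[OF this, of "map_prod (merge_vertex a b) (merge_vertex a b)"] show ?thesis by simp
  qed
qed

lemma wf_graph_contract:
  assumes wf: "wf_graph g (ws, es, m)" and j: "j < length es" and e: "es ! j = (a, b)"
    and ab: "a \<noteq> b"
  shows "wf_graph g (contract (ws, es, m) j)"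
proof -
  let ?L = "length ws" and ?r = "merge_vertex a b"
  let ?ws = "remove_nth b (ws[a := ws ! a + ws ! b])"
    and ?es = "map (map_prod ?r ?r) (remove_nth j es)"
  have ends: "\<forall>e\<in>set es. fst e < ?L \<and> snd e < ?L" and legs: "\<forall>i. m i < ?L"
    and conn: "\<forall>u<?L. \<forall>v<?L. (u, v) \<in> (edge_rel es)\<^sup>*"
    and genus: "length es + 1 + sum_list ws = ?L + g"
    using wf unfolding wf_graph_def by auto
  have "(a, b) \<in> set es" using e j by (metis nth_mem)
  then have a: "a < ?L" and b: "b < ?L" using ends by auto
  have r: "v < ?L \<Longrightarrow> ?r v < ?L - 1" for v using merge_vertex_less[OF a b ab] .
  have lengths: "length ?ws = ?L - 1" "length ?es = length es - 1"
    using b j by (simp_all add: length_remove_nth)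
  have ends': "fst e < length ?ws \<and> snd e < length ?ws" if "e \<in> set ?es" for e
  proof -
    obtain q s where qs: "(q, s) \<in> set es" and e: "e = (?r q, ?r s)"
      using \<open>e \<in> set ?es\<close> set_remove_nth[of j es] by auto
    have "q < ?L" "s < ?L" using ends qs by auto
    then show ?thesis unfolding e lengths(1) using r by simp
  qed
  have conn': "(u, v) \<in> (edge_rel ?es)\<^sup>*" if "u < length ?ws" "v < length ?ws" for u v
  proof -
    have "(succ_above b u, succ_above b v) \<in> (edge_rel es)\<^sup>*"
      using conn succ_above_less that lengths(1) by simp
    from rtrancl_edge_rel_map[where f = ?r, OF contract_edge_image[OF j e] this] show ?thesis
      by (simp add: merge_vertex_succ_above)
  qed
  have "length ?es + 1 + sum_list ?ws = length ?ws + g"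
    using genus lengths sum_list_merge_weights[OF a b ab] j a b ab by linarith
  moreover have "?ws \<noteq> []" using lengths(1) a b ab by auto
  ultimately show ?thesis
    unfolding contract_eq[OF e] wf_graph_def using ends' conn' legs r lengths by auto
qed

definition endpoints :: "nat \<times> nat \<Rightarrow> nat set" where
  "endpoints e = {fst e, snd e}"

lemma endpoints_map_prod: "endpoints (map_prod f f e) = f ` endpoints e"
  by (cases e) (simp add: endpoints_def)

lemma endpoints_eq_image_iff:
  "endpoints e' = f ` endpoints e \<longleftrightarrow> e' = (f (fst e), f (snd e)) \<or> e' = (f (snd e), f (fst e))"
  by (cases e; cases e') (auto simp: endpoints_def doubleton_eq_iff)

lemma permutes_doubleton:
  assumes \<pi>: "\<pi> permutes {..<L}" and "a < L" and "b < L" and "a \<noteq> b"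
    and ab': "{a', b'} = {\<pi> a, \<pi> b}"
  shows "a' < L" and "b' < L" and "a' \<noteq> b'"
proof -
  have "\<pi> a < L" "\<pi> b < L" using permutes_in_image[OF \<pi>] assms(2,3) by simp_all
  moreover have "\<pi> a \<noteq> \<pi> b" using permutes_inj[OF \<pi>] assms(4) by (meson injD)
  moreover have "a' = \<pi> a \<and> b' = \<pi> b \<or> a' = \<pi> b \<and> b' = \<pi> a"
    using ab' by (simp add: doubleton_eq_iff)
  ultimately show "a' < L" and "b' < L" and "a' \<noteq> b'" by auto
qed

lemma merge_vertex_perm:
  assumes \<pi>: "\<pi> permutes {..<L}" and a: "a < L" and b: "b < L" and ab: "a \<noteq> b"
    and ab': "{a', b'} = {\<pi> a, \<pi> b}"
  obtains \<pi>' where "\<pi>' permutes {..<L - 1}"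
    and "\<And>u. u < L \<Longrightarrow> \<pi>' (merge_vertex a b u) = merge_vertex a' b' (\<pi> u)"
proof
  define \<pi>' where "\<pi>' k = (if k < L - 1 then merge_vertex a' b' (\<pi> (succ_above b k)) else k)" for k
  note a'b' = permutes_doubleton[OF assms]
  show comm: "\<pi>' (merge_vertex a b u) = merge_vertex a' b' (\<pi> u)" if u: "u < L" for u
  proof -
    have "merge_vertex a' b' (\<pi> a) = merge_vertex a' b' (\<pi> b)"
      using ab' merge_vertex_right[of a' b'] by (auto simp: doubleton_eq_iff)
    then show ?thesis
      using merge_vertex_less[OF a b ab u] succ_above_merge_vertex[OF ab] by (simp add: \<pi>'_def)
  qed
  have surj: "{..<L - 1} \<subseteq> \<pi>' ` {..<L - 1}"
  proof
    fix t assume "t \<in> {..<L - 1}"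
    then have "succ_above b' t \<in> \<pi> ` {..<L}"
      using succ_above_less permutes_image[OF \<pi>] by simp
    then obtain u where u: "u < L" "\<pi> u = succ_above b' t" by auto
    then have "\<pi>' (merge_vertex a b u) = t" using comm merge_vertex_succ_above by simp
    then show "t \<in> \<pi>' ` {..<L - 1}" using merge_vertex_less[OF a b ab u(1)] by force
  qed
  moreover have "\<pi>' ` {..<L - 1} \<subseteq> {..<L - 1}"
    using merge_vertex_less[OF a'b'] permutes_in_image[OF \<pi>] succ_above_less
    by (auto simp: \<pi>'_def)
  moreover have "inj_on \<pi>' {..<L - 1}" using finite_surj_inj[OF _ surj] by simp
  ultimately have "bij_betw \<pi>' {..<L - 1} {..<L - 1}" by (auto simp: bij_betw_def)
  then show "\<pi>' permutes {..<L - 1}" by (rule bij_imp_permutes) (simp add: \<pi>'_def)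
qed

lemma merge_weights_perm:
  fixes ws ws' :: "'a::comm_monoid_add list"
  assumes \<pi>: "\<pi> permutes {..<length ws}" and len: "length ws' = length ws"
    and weights: "\<forall>v<length ws. ws' ! \<pi> v = ws ! v"
    and a: "a < length ws" and b: "b < length ws" and ab: "a \<noteq> b"
    and ab': "{a', b'} = {\<pi> a, \<pi> b}"
    and comm: "\<And>u. u < length ws \<Longrightarrow> \<pi>' (merge_vertex a b u) = merge_vertex a' b' (\<pi> u)"
    and v: "v < length ws - 1"
  shows "remove_nth b' (ws'[a' := ws' ! a' + ws' ! b']) ! \<pi>' v
    = remove_nth b (ws[a := ws ! a + ws ! b]) ! v"
proof -
  note a'b' = permutes_doubleton[OF \<pi> a b ab ab']
  define u where "u = succ_above b v"
  have u: "u < length ws" and v_eq: "v = merge_vertex a b u"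
    using succ_above_less v merge_vertex_succ_above unfolding u_def by auto
  have \<pi>u: "\<pi> u < length ws" using permutes_in_image[OF \<pi>] u by simp
  have "ws' ! a' + ws' ! b' = ws ! a + ws ! b"
    using ab' weights a b by (auto simp: doubleton_eq_iff ac_simps)
  moreover have "\<pi> u = a' \<or> \<pi> u = b' \<longleftrightarrow> u = a \<or> u = b"
    using ab' permutes_inj[OF \<pi>] by (auto simp: doubleton_eq_iff dest: injD)
  ultimately show ?thesis
    unfolding v_eq comm[OF u]
    using nth_merge_weights[OF a b ab u] nth_merge_weights[of a' ws' b' "\<pi> u"] a'b' len \<pi>u
      weights u
    by simp
qed

lemma endpoints_contract_edges:
  assumes \<sigma>: "\<sigma> permutes {..<length es}" and len: "length es' = length es"
    and edges: "\<forall>k<length es. endpoints (es' ! \<sigma> k) = \<pi> ` endpoints (es ! k)"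
    and ends: "\<forall>e\<in>set es. fst e < L \<and> snd e < L"
    and comm: "\<And>u. u < L \<Longrightarrow> \<pi>' (merge_vertex a b u) = merge_vertex a' b' (\<pi> u)"
    and j: "j < length es" and k: "k < length es - 1"
  shows "endpoints (map (map_prod (merge_vertex a' b') (merge_vertex a' b')) (remove_nth (\<sigma> j) es')
      ! perm_remove \<sigma> (length es) j k)
    = \<pi>' ` endpoints (map (map_prod (merge_vertex a b) (merge_vertex a b)) (remove_nth j es) ! k)"
proof -
  let ?r = "merge_vertex a b" and ?r' = "merge_vertex a' b'"
  define i where "i = succ_above j k"
  have i: "i < length es" using succ_above_less k unfolding i_def by simp
  have \<sigma>j: "\<sigma> j < length es'" using permutes_in_image[OF \<sigma>] j len by simp
  have "map (map_prod ?r' ?r') (remove_nth (\<sigma> j) es') ! perm_remove \<sigma> (length es) j k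
      = map_prod ?r' ?r' (es' ! \<sigma> i)"
    using nth_remove_nth[OF \<sigma>j] length_remove_nth[OF \<sigma>j] succ_above_perm_remove[OF \<sigma> j k] len
    unfolding i_def by simp
  moreover have "map (map_prod ?r ?r) (remove_nth j es) ! k = map_prod ?r ?r (es ! i)"
    using nth_remove_nth[OF j k] k length_remove_nth[OF j] unfolding i_def by simp
  moreover have "endpoints (es ! i) \<subseteq> {..<L}"
    using ends nth_mem[OF i] by (auto simp: endpoints_def)
  then have "?r' ` \<pi> ` endpoints (es ! i) = \<pi>' ` ?r ` endpoints (es ! i)"
    using comm by (auto simp: image_image intro!: image_cong)
  ultimately show ?thesis
    using edges i by (simp add: endpoints_map_prod image_comp)
qed

lemma graph_iso_contract:
  assumes wf: "wf_graph g (ws, es, m)" and iso: "graph_iso (ws, es, m) (ws', es', m') \<pi> \<sigma>"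
    and j: "j < length es" and e: "es ! j = (a, b)" and ab: "a \<noteq> b"
    and e': "es' ! \<sigma> j = (a', b')"
  shows "a' \<noteq> b'"
    and "\<exists>\<pi>'. graph_iso (contract (ws, es, m) j) (contract (ws', es', m') (\<sigma> j)) \<pi>'
                (perm_remove \<sigma> (length es) j)"
proof -
  let ?L = "length ws" and ?N = "length es" and ?\<tau> = "perm_remove \<sigma> (length es) j"
  let ?r = "merge_vertex a b" and ?r' = "merge_vertex a' b'"
  have ends: "\<forall>e\<in>set es. fst e < ?L \<and> snd e < ?L" and legs: "\<forall>i. m i < ?L"
    using wf unfolding wf_graph_def by auto
  have lengths: "length ws' = ?L" "length es' = ?N" and \<pi>: "\<pi> permutes {..<?L}"
    and \<sigma>: "\<sigma> permutes {..<?N}" and weights: "\<forall>v<?L. ws' ! \<pi> v = ws ! v"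
    and legs': "\<forall>i. m' i = \<pi> (m i)"
    and edges: "\<forall>k<?N. endpoints (es' ! \<sigma> k) = \<pi> ` endpoints (es ! k)"
    using iso unfolding graph_iso_def endpoints_eq_image_iff by auto
  have "(a, b) \<in> set es" using e j by (metis nth_mem)
  then have a: "a < ?L" and b: "b < ?L" using ends by auto
  have ab': "{a', b'} = {\<pi> a, \<pi> b}"
    using edges[rule_format, OF j] e e' by (simp add: endpoints_def)
  note a'b' = permutes_doubleton[OF \<pi> a b ab ab']
  show "a' \<noteq> b'" using a'b' by simp
  obtain \<pi>' where \<pi>': "\<pi>' permutes {..<?L - 1}"
    and comm: "\<And>u. u < ?L \<Longrightarrow> \<pi>' (?r u) = ?r' (\<pi> u)"
    using merge_vertex_perm[OF \<pi> a b ab ab'] by blast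
  show "\<exists>\<pi>'. graph_iso (contract (ws, es, m) j) (contract (ws', es', m') (\<sigma> j)) \<pi>' ?\<tau>"
    unfolding contract_eq[OF e] contract_eq[OF e'] graph_iso_def prod.case
      endpoints_eq_image_iff[symmetric]
    using merge_weights_perm[OF \<pi> lengths(1) weights a b ab ab' comm]
      endpoints_contract_edges[OF \<sigma> lengths(2) edges ends comm j] \<pi>'
      perm_remove_permutes[OF \<sigma> j] comm legs legs' lengths b a'b' j permutes_in_image[OF \<sigma>]
    by (intro exI[of _ \<pi>']) (simp add: length_remove_nth)
qed

section \<open>The differential preserves the relations\<close>

definition contraction_term :: "'n ograph \<Rightarrow> nat \<Rightarrow> 'n ograph \<Rightarrow> rat" where
  "contraction_term x j z = (if fst (fst (snd x) ! j) \<noteq> snd (fst (snd x) ! j)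
     then (-1) ^ j * delta (contract x j) z else 0)"

lemma dgen_eq_sum: "dgen x z = (\<Sum>j<deg x. contraction_term x j z)"
  unfolding dgen_def contraction_term_def delta_def by (intro sum.cong) auto

lemma contraction_term_rel:
  assumes wf: "wf_graph g x" and iso: "graph_iso x y \<pi> \<sigma>" and j: "j < deg x"
  shows "(\<lambda>z. contraction_term x j z - of_int (sign \<sigma>) * contraction_term y (\<sigma> j) z) \<in> Rel g"
proof -
  obtain ws es m ws' es' m' where x: "x = (ws, es, m)" and y: "y = (ws', es', m')"
    by (cases x, cases y) auto
  obtain a b a' b' where e: "es ! j = (a, b)" and e': "es' ! \<sigma> j = (a', b')" by fastforce
  have j': "j < length es" using j x by (simp add: deg_def)
  show ?thesis
  proof (cases "a = b")
    case True
    have "{a', b'} = {\<pi> a, \<pi> b}"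
      using iso j' e e' unfolding x y graph_iso_def by (auto simp: doubleton_eq_iff)
    then show ?thesis
      using True e e' lin_span_zero by (simp add: x y contraction_term_def Rel_def)
  next
    case False
    let ?\<tau> = "perm_remove \<sigma> (length es) j"
    have \<sigma>: "\<sigma> permutes {..<length es}" using iso unfolding x y graph_iso_def by simp
    note iso_c = graph_iso_contract[OF wf[unfolded x] iso[unfolded x y] j' e False e']
    then obtain \<pi>' where "graph_iso (contract x j) (contract y (\<sigma> j)) \<pi>' ?\<tau>"
      unfolding x y by blast
    then have "(\<lambda>z. delta (contract x j) z - of_int (sign ?\<tau>) * delta (contract y (\<sigma> j)) z)
        \<in> rel_vecs g"
      using wf_graph_contract[OF wf[unfolded x] j' e False] unfolding rel_vecs_def x by blast
    from lin_span_smult[OF lin_span_base[OF this], of "(-1) ^ j"]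
    have "(\<lambda>z. (-1) ^ j * delta (contract x j) z
        - ((-1) ^ j * (-1) ^ (j + \<sigma> j)) * of_int (sign \<sigma>) * delta (contract y (\<sigma> j)) z) \<in> Rel g"
      unfolding Rel_def sign_perm_remove[OF \<sigma> j'] by (simp add: algebra_simps)
    moreover have "(-1::rat) ^ j * (-1) ^ (j + \<sigma> j) = (-1) ^ \<sigma> j"
      by (simp add: power_add mult.assoc[symmetric] left_minus_one_mult_self)
    ultimately show ?thesis
      using False e e' iso_c(1) by (simp add: x y contraction_term_def mult_ac)
  qed
qed

lemma dgen_rel:
  assumes wf: "wf_graph g x" and iso: "graph_iso x y \<pi> \<sigma>"
  shows "(\<lambda>z. dgen x z - of_int (sign \<sigma>) * dgen y z) \<in> Rel g"
proof -
  have \<sigma>: "\<sigma> permutes {..<deg x}" and deg: "deg y = deg x"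
    using iso unfolding graph_iso_def deg_def by (auto split: prod.splits)
  have "dgen y z = (\<Sum>j<deg x. contraction_term y (\<sigma> j) z)" for z
    unfolding dgen_eq_sum deg
    by (rule sum.reindex_bij_betw[symmetric]) (rule permutes_imp_bij[OF \<sigma>])
  then have eq: "(\<lambda>z. dgen x z - of_int (sign \<sigma>) * dgen y z)
      = (\<lambda>z. \<Sum>j<deg x. contraction_term x j z - of_int (sign \<sigma>) * contraction_term y (\<sigma> j) z)"
    by (simp add: dgen_eq_sum sum_subtractf sum_distrib_left)
  show ?thesis
    unfolding eq Rel_def
    by (rule lin_span_sum) (simp_all add: contraction_term_rel[OF wf iso, unfolded Rel_def])
qed

lemma dfree_rel_vecs:
  assumes "v \<in> rel_vecs g"
  shows "dfree v \<in> Rel g"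
proof -
  obtain x y \<pi> \<sigma> where v: "v = (\<lambda>z. delta x z - of_int (sign \<sigma>) * delta y z)"
    and wf: "wf_graph g x" and iso: "graph_iso x y \<pi> \<sigma>"
    using assms unfolding rel_vecs_def by blast
  have "dfree v = (\<lambda>z'. dgen x z' - of_int (sign \<sigma>) * dgen y z')"
  proof
    fix z'
    have "dfree v z' = (\<Sum>z\<in>{x, y}. v z * dgen z z')"
      by (rule dfree_eq_sum) (auto simp: v delta_def)
    also have "\<dots> = dgen x z' - of_int (sign \<sigma>) * dgen y z'"
      by (cases "x = y") (auto simp: v delta_def algebra_simps)
    finally show "dfree v z' = dgen x z' - of_int (sign \<sigma>) * dgen y z'" .
  qed
  then show ?thesis using dgen_rel[OF wf iso] by simp
qed

lemma finite_support_rel_vecs: "v \<in> rel_vecs g \<Longrightarrow> finite_support v"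
  unfolding rel_vecs_def finite_support_def delta_def
  by (auto intro: finite_subset[of _ "{_, _}"])

lemma dfree_Rel: "r \<in> Rel g \<Longrightarrow> dfree r \<in> Rel g"
  unfolding Rel_def
  by (rule dfree_lin_span) (simp_all add: finite_support_rel_vecs dfree_rel_vecs[unfolded Rel_def])

lemma rep_coset_Rel:
  obtains r where "r \<in> Rel g" and "rep (coset (Rel g) f) = (\<lambda>z. f z + r z)"
  using rep_coset_diff[of "rel_vecs g" f] unfolding Rel_def
  by (metis (no_types, lifting) add_diff_cancel_left' add_diff_eq ext)

lemma dQ_coset:
  assumes "finite_support f"
  shows "dQ g (coset (Rel g) f) = coset (Rel g) (dfree f)"
proof -
  obtain r where r: "r \<in> Rel g" and rep: "rep (coset (Rel g) f) = (\<lambda>z. f z + r z)"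
    by (rule rep_coset_Rel)
  have "finite_support r"
    using r finite_support_lin_span finite_support_rel_vecs unfolding Rel_def by blast
  then have "dfree (rep (coset (Rel g) f)) = (\<lambda>y. dfree f y + dfree r y)"
    using dfree_linear[OF assms, of r 1] rep by simp
  then show ?thesis
    unfolding dQ_def Rel_def coset_eq_iff using dfree_Rel[OF r] by (simp add: Rel_def)
qed

lemma addQ_coset:
  "addQ g (coset (Rel g) f) (coset (Rel g) h) = coset (Rel g) (\<lambda>z. f z + h z)"
  unfolding addQ_def Rel_def by (rule coset_rep_add)

lemma smulQ_coset: "smulQ g c (coset (Rel g) f) = coset (Rel g) (\<lambda>z. c * f z)"
  unfolding smulQ_def Rel_def by (rule coset_rep_smult)

lemma GC_elemE:
  assumes "X \<in> GC g A k"
  obtains f where "X = coset (Rel g) f"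
    and "f \<in> lin_span (delta ` {x. stable_graph g A x \<and> deg x = k})"
  using assms unfolding GC_def by blast

lemma finite_support_lin_span_delta: "f \<in> lin_span (delta ` S) \<Longrightarrow> finite_support f"
  by (rule finite_support_lin_span) (auto simp: finite_support_delta)

section \<open>Relabelling the legs\<close>

definition relabel :: "('n \<Rightarrow> 'n) \<Rightarrow> 'n ograph \<Rightarrow> 'n ograph" where
  "relabel \<rho> x = (case x of (ws, es, m) \<Rightarrow> (ws, es, m \<circ> \<rho>))"

definition relabel_vec :: "('n \<Rightarrow> 'n) \<Rightarrow> ('n ograph \<Rightarrow> rat) \<Rightarrow> 'n ograph \<Rightarrow> rat" where
  "relabel_vec \<rho> f = (\<lambda>z. f (relabel \<rho> z))"

lemma relabel_inv_cancel:
  assumes "bij \<rho>"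
  shows "relabel \<rho> (relabel (inv \<rho>) z) = z" and "relabel (inv \<rho>) (relabel \<rho> z) = z"
  using assms
  by (cases z; simp add: relabel_def o_def bij_is_inj bij_is_surj surj_f_inv_f)+

lemma wf_graph_relabel: "wf_graph g x \<Longrightarrow> wf_graph g (relabel \<rho> x)"
  by (cases x) (auto simp: relabel_def wf_graph_def)

lemma graph_iso_relabel: "graph_iso x y \<pi> \<sigma> \<Longrightarrow> graph_iso (relabel \<rho> x) (relabel \<rho> y) \<pi> \<sigma>"
  by (cases x; cases y) (auto simp: relabel_def graph_iso_def)

lemma deg_relabel: "deg (relabel \<rho> x) = deg x"
  by (cases x) (auto simp: relabel_def deg_def)

lemma contract_relabel: "contract (relabel \<rho> x) j = relabel \<rho> (contract x j)"
  by (cases x) (auto simp: relabel_def contract_def Let_def o_def)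

lemma dgen_relabel:
  assumes "bij \<rho>"
  shows "dgen (relabel \<rho> x) y = dgen x (relabel (inv \<rho>) y)"
proof -
  have "relabel \<rho> c = y \<longleftrightarrow> c = relabel (inv \<rho>) y" for c
    using relabel_inv_cancel[OF assms] by metis
  moreover have "fst (snd (relabel \<rho> x)) = fst (snd x)" by (cases x) (simp add: relabel_def)
  ultimately show ?thesis unfolding dgen_def deg_relabel contract_relabel by simp
qed

lemma stable_graph_relabel:
  assumes "bij \<rho>"
  shows "stable_graph g (A \<circ> \<rho>) (relabel \<rho> x) = stable_graph g A x"
proof -
  obtain ws es m where x: "x = (ws, es, m)" by (cases x) auto
  have "(\<Sum>i\<in>{i. m (\<rho> i) = v}. A (\<rho> i)) = sum A {i. m i = v}" for v
    using assms
    by (intro sum.reindex_bij_witness[of _ "inv \<rho>" \<rho>])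
      (auto simp: bij_inv_eq_iff bij_is_inj bij_is_surj surj_f_inv_f)
  moreover have "wf_graph g (relabel \<rho> x) = wf_graph g x"
    using wf_graph_relabel[of g x \<rho>] wf_graph_relabel[of g "relabel \<rho> x" "inv \<rho>"]
      relabel_inv_cancel(2)[OF assms] by auto
  ultimately show ?thesis
    unfolding x stable_graph_def by (simp add: relabel_def)
qed

lemma relabel_vec_delta: "bij \<rho> \<Longrightarrow> relabel_vec \<rho> (delta x) = delta (relabel (inv \<rho>) x)"
  unfolding relabel_vec_def delta_def using relabel_inv_cancel by metis

lemma relabel_vec_inv: "bij \<rho> \<Longrightarrow> relabel_vec (inv \<rho>) (relabel_vec \<rho> f) = f"
  by (simp add: relabel_vec_def relabel_inv_cancel)

lemma relabel_vec_Rel: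
  assumes "bij \<rho>" and "r \<in> Rel g"
  shows "relabel_vec \<rho> r \<in> Rel g"
proof -
  have "relabel_vec \<rho> v \<in> lin_span (rel_vecs g)" if rel: "v \<in> rel_vecs g" for v
  proof -
    obtain x y \<pi> \<sigma> where v: "v = (\<lambda>z. delta x z - of_int (sign \<sigma>) * delta y z)"
      and "wf_graph g x" and "graph_iso x y \<pi> \<sigma>"
      using rel unfolding rel_vecs_def by blast
    then have "(\<lambda>z. delta (relabel (inv \<rho>) x) z - of_int (sign \<sigma>) * delta (relabel (inv \<rho>) y) z)
        \<in> rel_vecs g"
      unfolding rel_vecs_def using wf_graph_relabel graph_iso_relabel by blast
    moreover have "relabel_vec \<rho> v
        = (\<lambda>z. delta (relabel (inv \<rho>) x) z - of_int (sign \<sigma>) * delta (relabel (inv \<rho>) y) z)"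
      using relabel_vec_delta[OF assms(1)] unfolding v by (auto simp: relabel_vec_def fun_eq_iff)
    ultimately show ?thesis by (simp add: lin_span_base)
  qed
  then show ?thesis
    using lin_span_precomp[of "rel_vecs g" "relabel \<rho>"] assms(2)
    unfolding Rel_def relabel_vec_def by blast
qed

lemma finite_support_relabel_vec:
  assumes "bij \<rho>" and "finite_support f"
  shows "finite_support (relabel_vec \<rho> f)"
proof -
  have "inj (relabel \<rho>)" using relabel_inv_cancel(2)[OF assms(1)] by (metis injI)
  then have "finite (relabel \<rho> -` {w. f w \<noteq> 0})"
    using assms(2) finite_vimageI unfolding finite_support_def by blast
  then show ?thesis unfolding finite_support_def relabel_vec_def vimage_def by simp
qed

lemma dfree_relabel_vec:
  assumes "bij \<rho>"
  shows "dfree (relabel_vec \<rho> f) = relabel_vec \<rho> (dfree f)"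
proof
  fix y
  have "dfree (relabel_vec \<rho> f) y = (\<Sum>z\<in>{z. f (relabel \<rho> z) \<noteq> 0}. f (relabel \<rho> z) * dgen z y)"
    unfolding dfree_def relabel_vec_def ..
  also have "\<dots> = (\<Sum>w\<in>{w. f w \<noteq> 0}. f w * dgen (relabel (inv \<rho>) w) y)"
    by (rule sum.reindex_bij_witness[of _ "relabel (inv \<rho>)" "relabel \<rho>"])
      (auto simp: relabel_inv_cancel[OF assms])
  also have "\<dots> = relabel_vec \<rho> (dfree f) y"
    using dgen_relabel[OF bij_imp_bij_inv[OF assms]] assms
    by (simp add: relabel_vec_def dfree_def inv_inv_eq)
  finally show "dfree (relabel_vec \<rho> f) y = relabel_vec \<rho> (dfree f) y" .
qed

lemma relabel_vec_lin_span_stable: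
  assumes "bij \<rho>" and "f \<in> lin_span (delta ` {x. stable_graph g A x \<and> deg x = k})"
  shows "relabel_vec \<rho> f \<in> lin_span (delta ` {x. stable_graph g (A \<circ> inv \<rho>) x \<and> deg x = k})"
proof -
  have "relabel_vec \<rho> (delta x) \<in> delta ` {x. stable_graph g (A \<circ> inv \<rho>) x \<and> deg x = k}"
    if "stable_graph g A x" "deg x = k" for x
  proof -
    have "relabel (inv \<rho>) x \<in> {x. stable_graph g (A \<circ> inv \<rho>) x \<and> deg x = k}"
      using that stable_graph_relabel[OF bij_imp_bij_inv[OF assms(1)], of g A x]
      by (simp add: deg_relabel)
    from imageI[OF this, of delta] show ?thesis by (simp add: relabel_vec_delta[OF assms(1)])
  qed
  then show ?thesis
    using lin_span_precomp[OF _ assms(2), of "relabel \<rho>"] lin_span_base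
    unfolding relabel_vec_def by blast
qed

definition relabel_GC :: "nat \<Rightarrow> ('n::finite \<Rightarrow> 'n) \<Rightarrow> ('n ograph \<Rightarrow> rat) set \<Rightarrow> ('n ograph \<Rightarrow> rat) set" where
  "relabel_GC g \<rho> X = coset (Rel g) (relabel_vec \<rho> (rep X))"

lemma relabel_GC_coset:
  assumes "bij \<rho>"
  shows "relabel_GC g \<rho> (coset (Rel g) f) = coset (Rel g) (relabel_vec \<rho> f)"
proof -
  obtain r where r: "r \<in> Rel g" and rep: "rep (coset (Rel g) f) = (\<lambda>z. f z + r z)"
    by (rule rep_coset_Rel)
  have "(\<lambda>z. relabel_vec \<rho> (rep (coset (Rel g) f)) z - relabel_vec \<rho> f z) = relabel_vec \<rho> r"
    unfolding rep by (simp add: relabel_vec_def)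
  then show ?thesis
    using relabel_vec_Rel[OF assms r] unfolding relabel_GC_def Rel_def coset_eq_iff by simp
qed

lemma relabel_GC_GC:
  assumes "bij \<rho>" and "X \<in> GC g A k"
  shows "relabel_GC g \<rho> X \<in> GC g (A \<circ> inv \<rho>) k"
proof -
  obtain f where X: "X = coset (Rel g) f"
    and f: "f \<in> lin_span (delta ` {x. stable_graph g A x \<and> deg x = k})"
    using assms(2) by (rule GC_elemE)
  show ?thesis
    unfolding X relabel_GC_coset[OF assms(1)] GC_def
    using relabel_vec_lin_span_stable[OF assms(1) f] by blast
qed

lemma relabel_GC_inv:
  assumes "bij \<rho>" and "X \<in> GC g A k"
  shows "relabel_GC g (inv \<rho>) (relabel_GC g \<rho> X) = X"
proof -
  obtain f where X: "X = coset (Rel g) f" using assms(2) by (rule GC_elemE)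
  show ?thesis
    unfolding X relabel_GC_coset[OF assms(1)] relabel_GC_coset[OF bij_imp_bij_inv[OF assms(1)]]
    using relabel_vec_inv[OF assms(1)] by simp
qed

lemma bij_betw_relabel_GC:
  assumes \<sigma>: "bij \<sigma>"
  shows "bij_betw (relabel_GC g (inv \<sigma>)) (GC g A k) (GC g (A \<circ> \<sigma>) k)"
proof (rule bij_betw_byWitness[where f' = "relabel_GC g \<sigma>"])
  have \<rho>: "bij (inv \<sigma>)" and inv_\<rho>: "inv (inv \<sigma>) = \<sigma>"
    using \<sigma> by (simp_all add: bij_imp_bij_inv inv_inv_eq)
  have AB: "A \<circ> \<sigma> \<circ> inv \<sigma> = A"
    using \<sigma> by (auto simp: fun_eq_iff bij_is_surj surj_f_inv_f)
  show "\<forall>X\<in>GC g A k. relabel_GC g \<sigma> (relabel_GC g (inv \<sigma>) X) = X"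
    using relabel_GC_inv[OF \<rho>, of _ g A k] unfolding inv_\<rho> by blast
  show "\<forall>Y\<in>GC g (A \<circ> \<sigma>) k. relabel_GC g (inv \<sigma>) (relabel_GC g \<sigma> Y) = Y"
    using relabel_GC_inv[OF \<sigma>, of _ g "A \<circ> \<sigma>" k] by blast
  show "relabel_GC g (inv \<sigma>) ` GC g A k \<subseteq> GC g (A \<circ> \<sigma>) k"
    using relabel_GC_GC[OF \<rho>, of _ g A k] unfolding inv_\<rho> by blast
  show "relabel_GC g \<sigma> ` GC g (A \<circ> \<sigma>) k \<subseteq> GC g A k"
    using relabel_GC_GC[OF \<sigma>, of _ g "A \<circ> \<sigma>" k] unfolding AB by blast
qed

lemma relabel_GC_addQ:
  assumes "bij \<rho>" and X: "X \<in> GC g A k" and Y: "Y \<in> GC g A k"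
  shows "relabel_GC g \<rho> (addQ g X Y) = addQ g (relabel_GC g \<rho> X) (relabel_GC g \<rho> Y)"
proof -
  obtain f h where "X = coset (Rel g) f" "Y = coset (Rel g) h"
    using GC_elemE[OF X] GC_elemE[OF Y] by metis
  then show ?thesis by (simp add: addQ_coset relabel_GC_coset[OF assms(1)] relabel_vec_def)
qed

lemma relabel_GC_smulQ:
  assumes "bij \<rho>" and X: "X \<in> GC g A k"
  shows "relabel_GC g \<rho> (smulQ g c X) = smulQ g c (relabel_GC g \<rho> X)"
proof -
  obtain f where "X = coset (Rel g) f" using X by (rule GC_elemE)
  then show ?thesis by (simp add: smulQ_coset relabel_GC_coset[OF assms(1)] relabel_vec_def)
qed

lemma relabel_GC_dQ:
  assumes \<rho>: "bij \<rho>" and X_GC: "X \<in> GC g A k"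
  shows "relabel_GC g \<rho> (dQ g X) = dQ g (relabel_GC g \<rho> X)"
proof -
  obtain f where X: "X = coset (Rel g) f"
    and f_span: "f \<in> lin_span (delta ` {x. stable_graph g A x \<and> deg x = k})"
    using X_GC by (rule GC_elemE)
  have f: "finite_support f" using f_span by (rule finite_support_lin_span_delta)
  show ?thesis
    unfolding X dQ_coset[OF f] relabel_GC_coset[OF \<rho>]
    using dQ_coset[OF finite_support_relabel_vec[OF \<rho> f]]
    by (simp add: dfree_relabel_vec[OF \<rho>])
qed

lemma GC_iso_relabel:
  assumes \<sigma>: "bij \<sigma>"
  shows "GC_iso g A (A \<circ> \<sigma>)"
proof -
  have \<rho>: "bij (inv \<sigma>)" using \<sigma> by (simp add: bij_imp_bij_inv)
  show ?thesis
    unfolding GC_iso_def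
    using bij_betw_relabel_GC[OF \<sigma>] relabel_GC_addQ[OF \<rho>] relabel_GC_smulQ[OF \<rho>]
      relabel_GC_dQ[OF \<rho>]
    by (intro exI[of _ "\<lambda>k. relabel_GC g (inv \<sigma>)"]) blast
qed

section \<open>Stability and chambers\<close>

lemma stable_graph_mono:
  assumes le: "wd_le A B" and st: "stable_graph g A x"
  shows "stable_graph g B x"
proof -
  obtain ws es m where x: "x = (ws, es, m)" by (cases x) auto
  have "sum A {i. m i = v} \<le> sum B {i. m i = v}" for v
    using le unfolding wd_le_def by (intro sum_mono) auto
  then show ?thesis using st unfolding x stable_graph_def
    by (auto intro: less_le_trans add_left_mono)
qed

lemma wf_graph_valence_zero:
  assumes wf: "wf_graph g (ws, es, m)" and v: "v < length ws" and val: "valence es v = 0"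
  shows "ws = [g]"
proof -
  have ends: "\<forall>e\<in>set es. fst e < length ws \<and> snd e < length ws"
    and conn: "\<forall>u<length ws. \<forall>v<length ws. (u, v) \<in> (edge_rel es)\<^sup>*"
    and genus: "length es + 1 + sum_list ws = length ws + g"
    using wf unfolding wf_graph_def by auto
  have not_end: "fst e \<noteq> v \<and> snd e \<noteq> v" if "e \<in> set es" for e
    using val that unfolding valence_def by (auto simp: sum_list_eq_0_iff)
  have "(v, u) \<notin> edge_rel es" for u
    using not_end unfolding edge_rel_def by force
  then have "u = v" if "(v, u) \<in> (edge_rel es)\<^sup>*" for u
    using that by (auto elim: converse_rtranclE)
  moreover have "u < length ws \<Longrightarrow> (v, u) \<in> (edge_rel es)\<^sup>*" for u
    using conn v by blast
  ultimately have "length ws = 1"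
    using v by (metis One_nat_def less_2_cases_iff linorder_neqE_nat not_less0 zero_neq_one)
  moreover have "es = []"
  proof (rule ccontr)
    assume "es \<noteq> []"
    then obtain e where "e \<in> set es" by (cases es) auto
    then show False using not_end ends v \<open>length ws = 1\<close> by fastforce
  qed
  ultimately show ?thesis
    using genus by (cases ws) auto
qed

lemma vertex_stability_transfer:
  fixes A B :: "'n::finite \<Rightarrow> rat"
  assumes A: "\<forall>i. A i \<le> 1" and B: "\<forall>i. 0 < B i"
    and walls: "\<And>S. 2 \<le> card S \<Longrightarrow> 1 < sum A S \<Longrightarrow> 1 < sum B S"
    and wd: "w \<noteq> 0 \<or> d \<noteq> 0"
    and stA: "0 < 2 * of_nat w - 2 + of_nat d + sum A S"
  shows "0 < 2 * of_nat w - 2 + of_nat d + sum B S"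
proof -
  consider "w = 0" "d = 1" | "2 * w + d = 2" | "2 * w + d \<ge> 3"
    using wd by linarith
  then show ?thesis
  proof cases
    case 1
    then have "1 < sum A S" using stA by simp
    moreover have "sum A S \<le> of_nat (card S)"
      using sum_bounded_above[of S A 1] A by simp
    ultimately have "2 \<le> card S" by (cases "card S") (auto simp: of_nat_Suc)
    then show ?thesis using walls \<open>1 < sum A S\<close> 1 by simp
  next
    case 2
    then have "2 * (of_nat w :: rat) + of_nat d = 2"
      using arg_cong[OF 2, of "of_nat :: nat \<Rightarrow> rat"] by simp
    moreover have "S \<noteq> {}" using stA calculation by auto
    then have "0 < sum B S" using B by (intro sum_pos) auto
    ultimately show ?thesis by simp
  next
    case 3
    then have "(3::rat) \<le> 2 * of_nat w + of_nat d"
      using of_nat_mono[OF 3, where 'a = rat] by simp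
    moreover have "0 \<le> sum B S" using B by (simp add: sum_nonneg less_imp_le)
    ultimately show ?thesis by linarith
  qed
qed

lemma stable_graph_transfer:
  fixes A B :: "'n::finite \<Rightarrow> rat"
  assumes g: "g \<ge> 1" and A: "\<forall>i. A i \<le> 1" and B: "\<forall>i. 0 < B i"
    and walls: "\<And>S. 2 \<le> card S \<Longrightarrow> 1 < sum A S \<Longrightarrow> 1 < sum B S"
    and st: "stable_graph g A x"
  shows "stable_graph g B x"
proof -
  obtain ws es m where x: "x = (ws, es, m)" by (cases x) auto
  have wf: "wf_graph g (ws, es, m)" using st x unfolding stable_graph_def by simp
  have "0 < 2 * of_nat (ws ! v) - 2 + of_nat (valence es v) + sum B {i. m i = v}"
    if v: "v < length ws" for v
  proof (rule vertex_stability_transfer[OF A B walls])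
    show "ws ! v \<noteq> 0 \<or> valence es v \<noteq> 0"
      using wf_graph_valence_zero[OF wf v] g v by auto
    show "0 < 2 * of_nat (ws ! v) - 2 + of_nat (valence es v) + sum A {i. m i = v}"
      using st v unfolding x stable_graph_def by auto
  qed
  then show ?thesis using wf unfolding x stable_graph_def by simp
qed

lemma chamber_sum_gt_one_iff:
  fixes A B :: "'n::finite \<Rightarrow> rat"
  assumes Ch: "Ch \<in> chambers g" and A: "emb A \<in> Ch" and B: "emb B \<in> Ch"
    and S: "2 \<le> card S"
  shows "1 < sum A S \<longleftrightarrow> 1 < sum B S"
proof -
  define f where "f x = (\<Sum>i\<in>S. x $ i)" for x :: "real^'n"
  have "continuous_on Ch f" unfolding f_def by (intro continuous_intros)
  then have conn: "connected (f ` Ch)"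
    using Ch unfolding chambers_def by (intro connected_continuous_image in_components_connected)
  have off_walls: "f x \<noteq> 1" if "x \<in> Ch" for x
    using that in_components_subset[OF Ch[unfolded chambers_def]] S
    unfolding walls_def f_def by blast
  have f_emb: "f (emb C) = of_rat (sum C S)" for C :: "'n \<Rightarrow> rat"
    unfolding f_def emb_def by (simp add: of_rat_sum)
  have "1 < sum D S" if "1 < sum C S" "emb C \<in> Ch" "emb D \<in> Ch" for C D :: "'n \<Rightarrow> rat"
  proof (rule ccontr)
    assume "\<not> 1 < sum D S"
    then have "f (emb D) \<le> 1" "1 \<le> f (emb C)"
      using that(1) unfolding f_emb by (simp_all add: not_less less_imp_le)
    moreover have "f (emb D) \<in> f ` Ch" "f (emb C) \<in> f ` Ch" using that(2,3) by simp_all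
    ultimately have "1 \<in> f ` Ch"
      using conn unfolding connected_iff_interval by blast
    then show False using off_walls by (metis imageE)
  qed
  from this[of A B] this[of B A] show ?thesis using A B by argo
qed

lemma GC_mono:
  assumes "\<And>x. stable_graph g A x \<Longrightarrow> stable_graph g B x"
  shows "GC g A k \<subseteq> GC g B k"
proof -
  have "lin_span (delta ` {x. stable_graph g A x \<and> deg x = k})
      \<subseteq> lin_span (delta ` {x. stable_graph g B x \<and> deg x = k})"
    using assms by (intro lin_span_mono) blast
  then show ?thesis unfolding GC_def by blast
qed

lemma GC_eq_if_same_chamber:
  fixes A B :: "'n::finite \<Rightarrow> rat"
  assumes g: "g \<ge> 1" and A: "\<forall>i. 0 < A i \<and> A i \<le> 1" and B: "\<forall>i. 0 < B i \<and> B i \<le> 1"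
    and ChA: "in_chamber g A Ch" and ChB: "in_chamber g B Ch"
  shows "GC g A k = GC g B k"
proof -
  have walls: "1 < sum A S \<longleftrightarrow> 1 < sum B S" if "2 \<le> card S" for S
    using ChA ChB chamber_sum_gt_one_iff that unfolding in_chamber_def by blast
  show ?thesis
  proof (intro antisym GC_mono)
    show "stable_graph g B x" if "stable_graph g A x" for x
      using stable_graph_transfer[OF g _ _ _ that] A B walls by blast
    show "stable_graph g A x" if "stable_graph g B x" for x
      using stable_graph_transfer[OF g _ _ _ that] A B walls by blast
  qed
qed

lemma GC_iso_if_permuted_chambers:
  fixes A B :: "'n::finite \<Rightarrow> rat"
  assumes g: "g \<ge> 1" and A: "\<forall>i. 0 < A i \<and> A i \<le> 1" and B: "\<forall>i. 0 < B i \<and> B i \<le> 1"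
    and Ch1: "in_chamber g A Ch1" and Ch2: "in_chamber g B Ch2"
    and \<sigma>: "\<sigma> permutes UNIV" and image: "perm_vec \<sigma> ` Ch1 = Ch2"
  shows "GC_iso g A B"
proof -
  have "emb (A \<circ> \<sigma>) = perm_vec \<sigma> (emb A)" unfolding emb_def perm_vec_def by simp
  then have "in_chamber g (A \<circ> \<sigma>) Ch2" using Ch1 Ch2 image unfolding in_chamber_def by blast
  then have "GC g (A \<circ> \<sigma>) = GC g B"
    using GC_eq_if_same_chamber[OF g _ B _ Ch2] A by fastforce
  then show ?thesis using GC_iso_relabel[OF permutes_bij[OF \<sigma>], of g A] by (simp add: GC_iso_def)
qed

theorem mainTheorem7:
  fixes g :: nat and A B :: "'n::finite \<Rightarrow> rat"
  assumes "g \<ge> 1" and "weight_datum g A" and "weight_datum g B"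
  shows "(wd_le A B \<longrightarrow> GC_subcomplex g A B)
       \<and> ((\<exists>Ch. in_chamber g A Ch \<and> in_chamber g B Ch) \<longrightarrow> (\<forall>k. GC g A k = GC g B k))
       \<and> ((\<exists>\<sigma>. \<sigma> permutes (UNIV::'n set) \<and> B = A \<circ> \<sigma>) \<longrightarrow> GC_iso g A B)
       \<and> ((\<exists>Ch1 Ch2 \<sigma>. in_chamber g A Ch1 \<and> in_chamber g B Ch2 \<and> \<sigma> permutes (UNIV::'n set)
             \<and> perm_vec \<sigma> ` Ch1 = Ch2) \<longrightarrow> GC_iso g A B)"
proof (intro conjI impI)
  have A: "\<forall>i. 0 < A i \<and> A i \<le> 1" and B: "\<forall>i. 0 < B i \<and> B i \<le> 1"
    using assms(2,3) unfolding weight_datum_def by blast+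
  show "GC_subcomplex g A B" if "wd_le A B"
    unfolding GC_subcomplex_def using GC_mono stable_graph_mono[OF that] by blast
  show "\<forall>k. GC g A k = GC g B k" if "\<exists>Ch. in_chamber g A Ch \<and> in_chamber g B Ch"
    using that GC_eq_if_same_chamber[OF assms(1) A B] by blast
  show "GC_iso g A B" if "\<exists>\<sigma>. \<sigma> permutes (UNIV::'n set) \<and> B = A \<circ> \<sigma>"
    using that GC_iso_relabel permutes_bij by blast
  show "GC_iso g A B" if "\<exists>Ch1 Ch2 \<sigma>. in_chamber g A Ch1 \<and> in_chamber g B Ch2
      \<and> \<sigma> permutes (UNIV::'n set) \<and> perm_vec \<sigma> ` Ch1 = Ch2"
    using that GC_iso_if_permuted_chambers[OF assms(1) A B] by blast
qed

end
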